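(* Let $\Delta\subseteq\mathbb{Q}^2$ be a Fano triangle of Gorenstein index $g$. If the reduced weight system of $\Delta$ is $(1,1,1)$, then $g$ is odd.
   Context: A Fano triangle is a 2-dimensional simplex with primitive vertices in $\mathbb{Z}^2$ and the origin in its interior; its Gorenstein index is the least $g\ge1$ with $g\Delta^*$ having integral vertices, $\Delta^*=\{u:\langle u,v\rangle\ge-1\ \forall v\in\Delta\}$. For vertices $v_0,v_1,v_2$, the weight system is $(q_0,q_1,q_2)$ with $q_i=|\det(v_j:j\ne i)|$, and its reduction is the tuple divided by $\gcd(q_0,q_1,q_2)$. *)

theory Defs
  imports "HOL-Analysis.Analysis"
begin

definition primitive :: "int \<times> int \<Rightarrow> bool" where
  "primitive v \<longleftrightarrow> gcd (fst v) (snd v) = 1"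

definition rvec :: "int \<times> int \<Rightarrow> real \<times> real" where
  "rvec v = (real_of_int (fst v), real_of_int (snd v))"

definition triangle :: "int \<times> int \<Rightarrow> int \<times> int \<Rightarrow> int \<times> int \<Rightarrow> (real \<times> real) set" where
  "triangle v0 v1 v2 = convex hull {rvec v0, rvec v1, rvec v2}"

definition fano_triangle :: "int \<times> int \<Rightarrow> int \<times> int \<Rightarrow> int \<times> int \<Rightarrow> bool" where
  "fano_triangle v0 v1 v2 \<longleftrightarrow>
     primitive v0 \<and> primitive v1 \<and> primitive v2 \<and>
     \<not> collinear {rvec v0, rvec v1, rvec v2} \<and>
     0 \<in> interior (triangle v0 v1 v2)"

definition dual_polytope :: "(real \<times> real) set \<Rightarrow> (real \<times> real) set" where
  "dual_polytope S = {u. \<forall>v\<in>S. inner u v \<ge> -1}"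

definition integral_point :: "real \<times> real \<Rightarrow> bool" where
  "integral_point p \<longleftrightarrow> fst p \<in> \<int> \<and> snd p \<in> \<int>"

definition gorenstein_index :: "(real \<times> real) set \<Rightarrow> nat" where
  "gorenstein_index S = (LEAST g::nat. g \<ge> 1 \<and>
     (\<forall>u. u extreme_point_of ((\<lambda>x. real g *\<^sub>R x) ` dual_polytope S) \<longrightarrow> integral_point u))"

definition det2 :: "int \<times> int \<Rightarrow> int \<times> int \<Rightarrow> int" where
  "det2 a b = fst a * snd b - snd a * fst b"

definition weight_system :: "int \<times> int \<Rightarrow> int \<times> int \<Rightarrow> int \<times> int \<Rightarrow> int \<times> int \<times> int" where
  "weight_system v0 v1 v2 = (\<bar>det2 v1 v2\<bar>, \<bar>det2 v0 v2\<bar>, \<bar>det2 v0 v1\<bar>)"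

definition reduced_weight_system :: "int \<times> int \<Rightarrow> int \<times> int \<Rightarrow> int \<times> int \<Rightarrow> int \<times> int \<times> int" where
  "reduced_weight_system v0 v1 v2 =
     (case weight_system v0 v1 v2 of (q0, q1, q2) \<Rightarrow>
        let d = gcd q0 (gcd q1 q2) in (q0 div d, q1 div d, q2 div d))"

end

theory Submission
  imports Defs
begin

text \<open>
  If all three weights agree, the barycentric coordinates of the origin, which are proportional
  to the signed weights, are all equal; hence \<open>v\<^sub>0 + v\<^sub>1 + v\<^sub>2 = 0\<close>. Primitivity of \<open>v\<^sub>0\<close>,
  \<open>v\<^sub>1\<close> and \<open>v\<^sub>0 + v\<^sub>1 = -v\<^sub>2\<close> forces \<open>d = |det(v\<^sub>0, v\<^sub>1)|\<close> to be odd, since each of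
  these three vectors has an odd coordinate. Each vertex of the dual triangle
  solves two equations \<open>\<langle>u, v\<^sub>i\<rangle> = -1\<close> whose determinant is \<open>\<plusminus>d\<close>, so by Cramer's rule
  \<open>d\<Delta>\<^sup>*\<close> is a lattice polygon. The admissible multipliers are closed under \<open>gcd\<close>, so the
  Gorenstein index divides the odd number \<open>d\<close>.
\<close>

lemma extreme_point_of_scaleR_image_iff:
  fixes S :: "'a::real_vector set"
  assumes "c \<noteq> 0"
  shows "(c *\<^sub>R x) extreme_point_of ((\<lambda>x. c *\<^sub>R x) ` S) \<longleftrightarrow> x extreme_point_of S"
proof -
  have "linear (\<lambda>x::'a. c *\<^sub>R x)"
    by (simp add: linearI scaleR_add_right)
  moreover have "inj (\<lambda>x::'a. c *\<^sub>R x)"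
    using assms by (simp add: inj_def)
  ultimately have "(\<lambda>x. c *\<^sub>R x) ` {x} face_of (\<lambda>x. c *\<^sub>R x) ` S \<longleftrightarrow> {x} face_of S"
    by (rule face_of_linear_image)
  then show ?thesis
    by (simp add: face_of_singleton)
qed

lemma integral_extreme_points_scaleR_iff:
  fixes S :: "(real \<times> real) set"
  assumes "c \<noteq> 0"
  shows "(\<forall>u. u extreme_point_of ((\<lambda>x. c *\<^sub>R x) ` S) \<longrightarrow> integral_point u) \<longleftrightarrow>
         (\<forall>w. w extreme_point_of S \<longrightarrow> integral_point (c *\<^sub>R w))"
proof
  assume integral: "\<forall>u. u extreme_point_of ((\<lambda>x. c *\<^sub>R x) ` S) \<longrightarrow> integral_point u"
  show "\<forall>w. w extreme_point_of S \<longrightarrow> integral_point (c *\<^sub>R w)"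
    using integral extreme_point_of_scaleR_image_iff[OF assms] by blast
next
  assume integral: "\<forall>w. w extreme_point_of S \<longrightarrow> integral_point (c *\<^sub>R w)"
  show "\<forall>u. u extreme_point_of ((\<lambda>x. c *\<^sub>R x) ` S) \<longrightarrow> integral_point u"
  proof (intro allI impI)
    fix u
    assume u: "u extreme_point_of ((\<lambda>x. c *\<^sub>R x) ` S)"
    then obtain w where "u = c *\<^sub>R w"
      unfolding extreme_point_of_def by blast
    with u integral extreme_point_of_scaleR_image_iff[OF assms] show "integral_point u"
      by blast
  qed
qed

lemma integral_point_scaleR_gcd:
  assumes "integral_point (real m *\<^sub>R w)" and "integral_point (real n *\<^sub>R w)"
  shows "integral_point (real (gcd m n) *\<^sub>R w)"
proof -
  obtain s t :: int where "s * int m + t * int n = gcd (int m) (int n)"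
    using bezout_int by blast
  then have gcd_eq: "real (gcd m n) = of_int s * real m + of_int t * real n"
    by (metis gcd_int_int_eq of_int_add of_int_mult of_int_of_nat_eq)
  have "real (gcd m n) * fst w = of_int s * (real m * fst w) + of_int t * (real n * fst w)"
    and "real (gcd m n) * snd w = of_int s * (real m * snd w) + of_int t * (real n * snd w)"
    unfolding gcd_eq by (simp_all add: algebra_simps)
  with assms show ?thesis
    by (simp add: integral_point_def)
qed

lemma gorenstein_index_dvd:
  assumes "d \<ge> 1"
    and "\<And>w. w extreme_point_of dual_polytope S \<Longrightarrow> integral_point (real d *\<^sub>R w)"
  shows "gorenstein_index S dvd d"
proof -
  define admissible where "admissible g \<longleftrightarrow> g \<ge> 1 \<and>
    (\<forall>w. w extreme_point_of dual_polytope S \<longrightarrow> integral_point (real g *\<^sub>R w))" for g :: nat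
  have index_eq: "gorenstein_index S = (LEAST g. admissible g)"
    unfolding gorenstein_index_def admissible_def
  proof (rule arg_cong[where f = Least], rule ext, rule conj_cong[OF refl])
    fix g :: nat
    assume "1 \<le> g"
    then show "(\<forall>u. u extreme_point_of (\<lambda>x. real g *\<^sub>R x) ` dual_polytope S \<longrightarrow> integral_point u) \<longleftrightarrow>
      (\<forall>w. w extreme_point_of dual_polytope S \<longrightarrow> integral_point (real g *\<^sub>R w))"
      by (intro integral_extreme_points_scaleR_iff) simp
  qed
  have "admissible d"
    using assms by (simp add: admissible_def)
  then have admissible_index: "admissible (gorenstein_index S)"
    unfolding index_eq by (rule LeastI)
  have "admissible (gcd (gorenstein_index S) d)"
    unfolding admissible_def
  proof (intro conjI allI impI)
    show "1 \<le> gcd (gorenstein_index S) d"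
      using assms(1) by (simp add: Suc_le_eq)
    fix w
    assume "w extreme_point_of dual_polytope S"
    with admissible_index assms(2) show "integral_point (real (gcd (gorenstein_index S) d) *\<^sub>R w)"
      unfolding admissible_def by (blast intro: integral_point_scaleR_gcd)
  qed
  then have "gorenstein_index S \<le> gcd (gorenstein_index S) d"
    unfolding index_eq by (rule Least_le)
  moreover have "gcd (gorenstein_index S) d \<le> gorenstein_index S"
    using admissible_index by (simp add: admissible_def gcd_le1_nat)
  ultimately show ?thesis
    by (metis antisym gcd_dvd2)
qed

lemma dual_polytope_triangle:
  "dual_polytope (triangle v0 v1 v2) =
     {u. inner u (rvec v0) \<ge> -1 \<and> inner u (rvec v1) \<ge> -1 \<and> inner u (rvec v2) \<ge> -1}"
proof (intro equalityI subsetI)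
  fix u
  assume "u \<in> dual_polytope (triangle v0 v1 v2)"
  then show "u \<in> {u. inner u (rvec v0) \<ge> -1 \<and> inner u (rvec v1) \<ge> -1 \<and> inner u (rvec v2) \<ge> -1}"
    unfolding dual_polytope_def triangle_def
    using hull_subset[of "{rvec v0, rvec v1, rvec v2}" convex] by blast
next
  fix u
  assume "u \<in> {u. inner u (rvec v0) \<ge> -1 \<and> inner u (rvec v1) \<ge> -1 \<and> inner u (rvec v2) \<ge> -1}"
  then have h: "inner u (rvec v0) \<ge> -1" "inner u (rvec v1) \<ge> -1" "inner u (rvec v2) \<ge> -1"
    by auto
  show "u \<in> dual_polytope (triangle v0 v1 v2)"
    unfolding dual_polytope_def triangle_def convex_hull_3
  proof (clarsimp simp: inner_add_right)
    fix a b c :: real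
    assume abc: "0 \<le> a" "0 \<le> b" "0 \<le> c" "a + b + c = 1"
    have "a * inner u (rvec v0) \<ge> a * -1"
      using abc h by (intro mult_left_mono) auto
    moreover have "b * inner u (rvec v1) \<ge> b * -1"
      using abc h by (intro mult_left_mono) auto
    moreover have "c * inner u (rvec v2) \<ge> c * -1"
      using abc h by (intro mult_left_mono) auto
    ultimately
    show "- 1 \<le> a * inner u (rvec v0) + b * inner u (rvec v1) + c * inner u (rvec v2)"
      using abc by linarith
  qed
qed

text \<open>A point of the intersection of three half-planes that lies strictly inside two of them
  can be moved both ways along the boundary line of the third.\<close>
lemma not_extreme_point_of_halfplanes:
  fixes a b c w :: "real \<times> real"
  assumes "c \<noteq> 0" and "inner w a > -1" and "inner w b > -1"
    and P_def: "P = {u. inner u a \<ge> -1 \<and> inner u b \<ge> -1 \<and> inner u c \<ge> -1}"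
    and "w \<in> P"
  shows "\<not> w extreme_point_of P"
proof
  assume extreme: "w extreme_point_of P"
  define z :: "real \<times> real" where "z = (- snd c, fst c)"
  have "inner z c = 0"
    unfolding z_def by (cases c) (simp add: inner_Pair)
  have "z \<noteq> 0"
    using \<open>c \<noteq> 0\<close> unfolding z_def by (cases c) (auto simp: zero_prod_def)
  define m where "m = min (inner w a + 1) (inner w b + 1)"
  define M where "M = \<bar>inner z a\<bar> + \<bar>inner z b\<bar> + 1"
  define e where "e = m / M"
  have "m > 0" "M > 0"
    using assms unfolding m_def M_def by auto
  then have "e > 0"
    unfolding e_def by simp
  have "e * M = m"
    using \<open>M > 0\<close> by (simp add: e_def)
  then have "e * \<bar>inner z a\<bar> + e * \<bar>inner z b\<bar> + e = m"
    by (simp add: M_def distrib_left)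
  moreover have "e * \<bar>inner z a\<bar> \<ge> 0" "e * \<bar>inner z b\<bar> \<ge> 0"
    using \<open>e > 0\<close> by simp_all
  ultimately have "\<bar>e * inner z a\<bar> \<le> m \<and> \<bar>e * inner z b\<bar> \<le> m"
    using \<open>e > 0\<close> unfolding abs_mult abs_of_pos[OF \<open>e > 0\<close>] by (intro conjI; linarith)
  moreover have "inner w c \<ge> -1"
    using \<open>w \<in> P\<close> P_def by auto
  ultimately have "w + e *\<^sub>R z \<in> P" "w - e *\<^sub>R z \<in> P"
    using \<open>inner z c = 0\<close> unfolding P_def m_def by (auto simp: inner_add_left inner_diff_left)
  moreover have "w \<in> open_segment (w - e *\<^sub>R z) (w + e *\<^sub>R z)"
  proof -
    have "(w + e *\<^sub>R z) - (w - e *\<^sub>R z) = (e + e) *\<^sub>R z"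
      by (simp add: scaleR_left_distrib[symmetric] del: scaleR_left_distrib)
    then have "w - e *\<^sub>R z \<noteq> w + e *\<^sub>R z"
      using \<open>e > 0\<close> \<open>z \<noteq> 0\<close> by force
    moreover have "midpoint (w - e *\<^sub>R z) (w + e *\<^sub>R z) = w"
      by (simp add: midpoint_def algebra_simps) (simp add: scaleR_2[symmetric])
    ultimately show ?thesis
      using midpoint_in_open_segment[of "w - e *\<^sub>R z" "w + e *\<^sub>R z"] by simp
  qed
  ultimately show False
    using extreme unfolding extreme_point_of_def by blast
qed

lemma extreme_point_dual_triangle_two_tight:
  assumes "rvec v0 \<noteq> 0" "rvec v1 \<noteq> 0" "rvec v2 \<noteq> 0"
    and "w extreme_point_of dual_polytope (triangle v0 v1 v2)"
  shows "(inner w (rvec v0) = -1 \<and> inner w (rvec v1) = -1) \<or>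
         (inner w (rvec v0) = -1 \<and> inner w (rvec v2) = -1) \<or>
         (inner w (rvec v1) = -1 \<and> inner w (rvec v2) = -1)"
proof -
  let ?P = "dual_polytope (triangle v0 v1 v2)"
  have "w \<in> ?P"
    using assms(4) extreme_point_of_def by blast
  then have ge: "inner w (rvec v0) \<ge> -1" "inner w (rvec v1) \<ge> -1" "inner w (rvec v2) \<ge> -1"
    by (auto simp: dual_polytope_triangle)
  have "\<not> (inner w (rvec v0) > -1 \<and> inner w (rvec v1) > -1)"
    using not_extreme_point_of_halfplanes[OF assms(3), of w "rvec v0" "rvec v1" ?P] \<open>w \<in> ?P\<close> assms(4)
    by (auto simp: dual_polytope_triangle)
  moreover have "\<not> (inner w (rvec v0) > -1 \<and> inner w (rvec v2) > -1)"
    using not_extreme_point_of_halfplanes[OF assms(2), of w "rvec v0" "rvec v2" ?P] \<open>w \<in> ?P\<close> assms(4)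
    by (auto simp: dual_polytope_triangle conj_ac)
  moreover have "\<not> (inner w (rvec v1) > -1 \<and> inner w (rvec v2) > -1)"
    using not_extreme_point_of_halfplanes[OF assms(1), of w "rvec v1" "rvec v2" ?P] \<open>w \<in> ?P\<close> assms(4)
    by (auto simp: dual_polytope_triangle conj_ac)
  ultimately show ?thesis
    using ge by linarith
qed

lemma integral_point_det2_scaleR:
  assumes "inner w (rvec a) = -1" and "inner w (rvec b) = -1"
  shows "integral_point (real_of_int \<bar>det2 a b\<bar> *\<^sub>R w)"
proof -
  obtain p q where w: "w = (p, q)" by (cases w)
  obtain xa ya where a: "a = (xa, ya)" by (cases a)
  obtain xb yb where b: "b = (xb, yb)" by (cases b)
  have "p * xa + q * ya = -1" "p * xb + q * yb = -1"
    using assms by (simp_all add: w a b rvec_def inner_Pair mult.commute)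
  then have px: "p * xa = -1 - q * ya" "p * xb = -1 - q * yb"
    and qy: "q * ya = -1 - p * xa" "q * yb = -1 - p * xb"
    by linarith+
  have "real_of_int (det2 a b) * p = (p * xa) * yb - ya * (p * xb)"
    by (simp add: det2_def a b algebra_simps)
  also have "\<dots> = ya - yb"
    unfolding px by (simp add: algebra_simps)
  finally have "real_of_int (det2 a b) * p = ya - yb" .
  have "real_of_int (det2 a b) * q = xa * (q * yb) - (q * ya) * xb"
    by (simp add: det2_def a b algebra_simps)
  also have "\<dots> = xb - xa"
    unfolding qy by (simp add: algebra_simps)
  finally have "real_of_int (det2 a b) * q = xb - xa" .
  with \<open>real_of_int (det2 a b) * p = ya - yb\<close> show ?thesis
    by (cases "det2 a b \<ge> 0") (auto simp: integral_point_def w minus_in_Ints_iff)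
qed

lemma rvec_eq_0_iff: "rvec v = 0 \<longleftrightarrow> v = 0"
  by (cases v) (simp add: rvec_def zero_prod_def)

lemma primitive_nonzero: "primitive v \<Longrightarrow> v \<noteq> 0"
  by (cases v) (auto simp: primitive_def zero_prod_def)

lemma primitive_uminus_iff: "primitive (- v) \<longleftrightarrow> primitive v"
  by (simp add: primitive_def)

lemma integral_point_scaled_extreme_point_dual_triangle:
  assumes "primitive v0" "primitive v1" "primitive v2"
    and "\<bar>det2 v1 v2\<bar> = d" "\<bar>det2 v0 v2\<bar> = d" "\<bar>det2 v0 v1\<bar> = d"
    and "w extreme_point_of dual_polytope (triangle v0 v1 v2)"
  shows "integral_point (real_of_int d *\<^sub>R w)"
proof -
  have "rvec v0 \<noteq> 0" "rvec v1 \<noteq> 0" "rvec v2 \<noteq> 0"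
    using assms(1-3) by (simp_all add: rvec_eq_0_iff primitive_nonzero)
  from extreme_point_dual_triangle_two_tight[OF this assms(7)] show ?thesis
  proof (elim disjE conjE)
    assume "inner w (rvec v0) = -1" "inner w (rvec v1) = -1"
    from integral_point_det2_scaleR[OF this] show ?thesis
      using assms(6) by simp
  next
    assume "inner w (rvec v0) = -1" "inner w (rvec v2) = -1"
    from integral_point_det2_scaleR[OF this] show ?thesis
      using assms(5) by simp
  next
    assume "inner w (rvec v1) = -1" "inner w (rvec v2) = -1"
    from integral_point_det2_scaleR[OF this] show ?thesis
      using assms(4) by simp
  qed
qed

lemma equal_weights_if_reduced_weight_system_111:
  assumes "reduced_weight_system v0 v1 v2 = (1, 1, 1)"
  shows "\<bar>det2 v1 v2\<bar> = \<bar>det2 v0 v1\<bar>" "\<bar>det2 v0 v2\<bar> = \<bar>det2 v0 v1\<bar>" "det2 v0 v1 \<noteq> 0"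
proof -
  define G where "G = gcd \<bar>det2 v1 v2\<bar> (gcd \<bar>det2 v0 v2\<bar> \<bar>det2 v0 v1\<bar>)"
  have quotients: "\<bar>det2 v1 v2\<bar> div G = 1" "\<bar>det2 v0 v2\<bar> div G = 1" "\<bar>det2 v0 v1\<bar> div G = 1"
    using assms unfolding reduced_weight_system_def weight_system_def G_def
    by (simp_all add: Let_def)
  have "G dvd \<bar>det2 v1 v2\<bar>" "G dvd \<bar>det2 v0 v2\<bar>" "G dvd \<bar>det2 v0 v1\<bar>"
    unfolding G_def by (meson dvd_trans gcd_dvd1 gcd_dvd2)+
  with quotients have "\<bar>det2 v1 v2\<bar> = G" "\<bar>det2 v0 v2\<bar> = G" "\<bar>det2 v0 v1\<bar> = G"
    by (metis dvd_div_mult_self mult_1)+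
  moreover have "G \<noteq> 0"
    using quotients(1) by auto
  ultimately show "\<bar>det2 v1 v2\<bar> = \<bar>det2 v0 v1\<bar>" "\<bar>det2 v0 v2\<bar> = \<bar>det2 v0 v1\<bar>" "det2 v0 v1 \<noteq> 0"
    by simp_all
qed

lemma eq_0_if_det2_eq_0:
  assumes "det2 s a = 0" and "det2 s b = 0" and "det2 a b \<noteq> 0"
  shows "s = 0"
proof -
  have "fst s * det2 a b = fst a * det2 s b - fst b * det2 s a"
    and "snd s * det2 a b = snd a * det2 s b - snd b * det2 s a"
    by (simp_all add: det2_def algebra_simps)
  with assms show ?thesis
    by (simp add: prod_eq_iff)
qed

text \<open>Wedging \<open>a v\<^sub>0 + b v\<^sub>1 + c v\<^sub>2 = 0\<close> with \<open>v\<^sub>1\<close> and \<open>v\<^sub>0\<close> gives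
  \<open>a det(v\<^sub>0, v\<^sub>1) = c det(v\<^sub>1, v\<^sub>2)\<close> and \<open>b det(v\<^sub>0, v\<^sub>1) = - c det(v\<^sub>0, v\<^sub>2)\<close>; a wrong
  sign in either relation would force two of the nonnegative coordinates \<open>a, b, c\<close> to vanish.\<close>
lemma vertex_sum_eq_0_if_equal_weights:
  assumes "0 \<in> triangle v0 v1 v2"
    and "\<bar>det2 v1 v2\<bar> = \<bar>det2 v0 v1\<bar>" "\<bar>det2 v0 v2\<bar> = \<bar>det2 v0 v1\<bar>" "det2 v0 v1 \<noteq> 0"
  shows "v0 + v1 + v2 = 0"
proof -
  obtain a b c :: real where abc: "0 \<le> a" "0 \<le> b" "0 \<le> c" "a + b + c = 1"
    and origin: "a *\<^sub>R rvec v0 + b *\<^sub>R rvec v1 + c *\<^sub>R rvec v2 = 0"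
    using assms(1) unfolding triangle_def convex_hull_3 by force
  obtain x0 y0 x1 y1 x2 y2 where v: "v0 = (x0, y0)" "v1 = (x1, y1)" "v2 = (x2, y2)"
    by (metis surj_pair)
  have xs: "a * x0 + b * x1 + c * x2 = 0" and ys: "a * y0 + b * y1 + c * y2 = 0"
    using origin by (simp_all add: v rvec_def zero_prod_def)
  have "a * det2 v0 v1 - c * det2 v1 v2 = (a * x0 + b * x1 + c * x2) * y1 - (a * y0 + b * y1 + c * y2) * x1"
    and "b * det2 v0 v1 + c * det2 v0 v2 = (a * y0 + b * y1 + c * y2) * x0 - (a * x0 + b * x1 + c * x2) * y0"
    by (simp_all add: det2_def v algebra_simps)
  with xs ys have rel1: "a * det2 v0 v1 = c * det2 v1 v2" and rel2: "b * det2 v0 v1 = - c * det2 v0 v2"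
    by simp_all
  have "det2 v1 v2 = det2 v0 v1"
  proof (rule ccontr)
    assume "det2 v1 v2 \<noteq> det2 v0 v1"
    with assms(2) have "det2 v1 v2 = - det2 v0 v1" by arith
    with rel1 have "(a + c) * det2 v0 v1 = 0" by (simp add: algebra_simps)
    with assms(4) have "a + c = 0" by simp
    with abc have "c = 0" "b = 1" by linarith+
    with rel2 assms(4) show False by simp
  qed
  moreover have "det2 v0 v2 = - det2 v0 v1"
  proof (rule ccontr)
    assume "det2 v0 v2 \<noteq> - det2 v0 v1"
    with assms(3) have "det2 v0 v2 = det2 v0 v1" by arith
    with rel2 have "(b + c) * det2 v0 v1 = 0" by (simp add: algebra_simps)
    with assms(4) have "b + c = 0" by simp
    with abc have "c = 0" "a = 1" by linarith+
    with rel1 assms(4) show False by simp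
  qed
  ultimately have "det2 (v0 + v1 + v2) v1 = 0" "det2 (v0 + v1 + v2) v0 = 0"
    by (simp_all add: det2_def v algebra_simps)
  with assms(4) show ?thesis
    by (intro eq_0_if_det2_eq_0) auto
qed

lemma odd_det2_if_primitive:
  assumes "primitive u" "primitive v" "primitive (u + v)"
  shows "odd (det2 u v)"
proof -
  have odd_coordinate: "odd (fst w) \<or> odd (snd w)" if "primitive w" for w
  proof (rule ccontr)
    assume "\<not> (odd (fst w) \<or> odd (snd w))"
    then have "2 dvd gcd (fst w) (snd w)" by simp
    with that show False by (simp add: primitive_def)
  qed
  show ?thesis
    using odd_coordinate[OF assms(1)] odd_coordinate[OF assms(2)] odd_coordinate[OF assms(3)]
    by (auto simp: det2_def even_mult_iff)
qed

theorem proposition4p3: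
  fixes v0 v1 v2 :: "int \<times> int"
  assumes "fano_triangle v0 v1 v2"
    and "reduced_weight_system v0 v1 v2 = (1, 1, 1)"
  shows "odd (gorenstein_index (triangle v0 v1 v2))"
proof -
  have primitive: "primitive v0" "primitive v1" "primitive v2"
    and "0 \<in> triangle v0 v1 v2"
    using assms(1) interior_subset unfolding fano_triangle_def by auto
  note weights = equal_weights_if_reduced_weight_system_111[OF assms(2)]
  have "v0 + v1 = - v2"
    using vertex_sum_eq_0_if_equal_weights[OF \<open>0 \<in> triangle v0 v1 v2\<close> weights]
    by (simp add: eq_neg_iff_add_eq_0)
  then have "odd (det2 v0 v1)"
    using primitive by (simp add: odd_det2_if_primitive primitive_uminus_iff)
  define d where "d = nat \<bar>det2 v0 v1\<bar>"
  have "odd d" "d \<ge> 1"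
    using \<open>odd (det2 v0 v1)\<close> weights(3) by (auto simp: d_def even_nat_iff)
  have "integral_point (real d *\<^sub>R w)"
    if "w extreme_point_of dual_polytope (triangle v0 v1 v2)" for w
    using integral_point_scaled_extreme_point_dual_triangle[OF primitive weights(1,2) refl that]
    by (simp add: d_def)
  then have "gorenstein_index (triangle v0 v1 v2) dvd d"
    using \<open>d \<ge> 1\<close> by (rule gorenstein_index_dvd[rotated])
  with \<open>odd d\<close> show ?thesis
    using dvd_trans by blast
qed

end
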